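(* Let $\mathcal{M}=\{p(x\mid\theta):\ x\in\mathcal{X},\ \theta\in\Theta\}$ be a model that has a sufficient statistic $t=t(x)\in\mathcal{T}$ for $\theta$, let $\mathcal{P}$ be a class of priors, $\mathbf{X}=(x_1,\dots,x_M)$ data and $\gamma>0$. Let $T=(t(x_1),\dots,t(x_M))\in\mathcal{T}^M$ and let $\mathcal{M}_t=\{p(t\mid\theta):\ t\in\mathcal{T},\ \theta\in\Theta\}$ be the corresponding model in terms of $t$. Then \[ \pi_{\rm er}(\cdot\mid\mathcal{M},\mathcal{P},\mathbf{X},\gamma)=\pi_{\rm er}(\cdot\mid\mathcal{M}_t,\mathcal{P},T,\gamma), \] i.e. a density is an empirical reference prior for $(\mathcal{M},\mathcal{P},\mathbf{X},\gamma)$ if and only if it is one for $(\mathcal{M}_t,\mathcal{P},T,\gamma)$.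
   Context: For a model $\mathcal{N}=\{p(y\mid\theta)\}$ and prior $\pi$: $p(y\mid\pi)=\int p(y\mid\theta)\pi(\theta)\,\mathrm d\theta$; for data $\mathbf{Y}=(y_1,\dots,y_M)$ the marginal likelihood is $L(\pi\mid\mathcal{N},\mathbf{Y})=\prod_{m=1}^M p(y_m\mid\pi)$; $\mathcal{N}^k$ is the model of $k$ independent replications, $p(\vec y\mid\theta)=\prod_{i=1}^k p(y^{(i)}\mid\theta)$; the expected information is $\mathcal{I}[\pi\mid\mathcal{N}]=\int\int\pi(\theta)p(y\mid\theta)\log\big(p(y\mid\theta)/p(y\mid\pi)\big)\,\mathrm dy\,\mathrm d\theta$. A proper probability density $\pi\in\mathcal{P}$ is an empirical reference prior $\pi_{\rm er}(\cdot\mid\mathcal{N},\mathcal{P},\mathbf{Y},\gamma)$ if for every proper probability density $\tilde\pi\in\mathcal{P}$, $\lim_{k\to\infty}\big((\log L(\pi\mid\mathcal{N},\mathbf{Y})+\gamma\mathcal{I}[\pi\mid\mathcal{N}^k])-(\log L(\tilde\pi\mid\mathcal{N},\mathbf{Y})+\gamma\mathcal{I}[\tilde\pi\mid\mathcal{N}^k])\big)\ge 0$. *)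

theory Defs
  imports "HOL-Probability.Probability"
begin

definition eln :: "real \<Rightarrow> ereal" where
  "eln x = (if 0 < x then ereal (ln x) else -\<infinity>)"

definition density_model :: "'y measure \<Rightarrow> 'p measure \<Rightarrow> ('y \<Rightarrow> 'p \<Rightarrow> real) \<Rightarrow> bool" where
  "density_model MY MP p \<longleftrightarrow>
     sigma_finite_measure MY \<and> sigma_finite_measure MP \<and>
     (\<lambda>(y, \<theta>). p y \<theta>) \<in> borel_measurable (MY \<Otimes>\<^sub>M MP) \<and>
     (\<forall>y\<in>space MY. \<forall>\<theta>\<in>space MP. 0 \<le> p y \<theta>) \<and>
     (\<forall>\<theta>\<in>space MP. prob_space (density MY (\<lambda>y. ennreal (p y \<theta>))))"

definition proper_prior :: "'p measure \<Rightarrow> ('p \<Rightarrow> real) \<Rightarrow> bool" where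
  "proper_prior MP \<pi> \<longleftrightarrow>
     \<pi> \<in> borel_measurable MP \<and> (\<forall>\<theta>\<in>space MP. 0 \<le> \<pi> \<theta>) \<and>
     (\<integral>\<^sup>+ \<theta>. ennreal (\<pi> \<theta>) \<partial>MP) = 1"

definition marg :: "'p measure \<Rightarrow> ('y \<Rightarrow> 'p \<Rightarrow> real) \<Rightarrow> ('p \<Rightarrow> real) \<Rightarrow> 'y \<Rightarrow> real" where
  "marg MP p \<pi> y = (\<integral>\<theta>. p y \<theta> * \<pi> \<theta> \<partial>MP)"

definition log_lik :: "'p measure \<Rightarrow> ('y \<Rightarrow> 'p \<Rightarrow> real) \<Rightarrow> ('p \<Rightarrow> real) \<Rightarrow> 'y list \<Rightarrow> ereal" where
  "log_lik MP p \<pi> ys = (\<Sum>y\<leftarrow>ys. eln (marg MP p \<pi> y))"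

definition rep_dens :: "('y \<Rightarrow> 'p \<Rightarrow> real) \<Rightarrow> nat \<Rightarrow> (nat \<Rightarrow> 'y) \<Rightarrow> 'p \<Rightarrow> real" where
  "rep_dens p k ys \<theta> = (\<Prod>i<k. p (ys i) \<theta>)"

definition rep_meas :: "'y measure \<Rightarrow> nat \<Rightarrow> (nat \<Rightarrow> 'y) measure" where
  "rep_meas MY k = PiM {..<k} (\<lambda>_. MY)"

definition exp_info :: "'y measure \<Rightarrow> 'p measure \<Rightarrow> ('y \<Rightarrow> 'p \<Rightarrow> real) \<Rightarrow> ('p \<Rightarrow> real) \<Rightarrow> real" where
  "exp_info MY MP p \<pi> =
     (\<integral>\<theta>. (\<integral>y. \<pi> \<theta> * p y \<theta> * ln (p y \<theta> / marg MP p \<pi> y) \<partial>MY) \<partial>MP)"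

definition erp_objective ::
  "'y measure \<Rightarrow> 'p measure \<Rightarrow> ('y \<Rightarrow> 'p \<Rightarrow> real) \<Rightarrow> 'y list \<Rightarrow> real \<Rightarrow> ('p \<Rightarrow> real) \<Rightarrow> nat \<Rightarrow> ereal" where
  "erp_objective MY MP p ys \<gamma> \<pi> k =
     log_lik MP p \<pi> ys + ereal (\<gamma> * exp_info (rep_meas MY k) MP (rep_dens p k) \<pi>)"

definition is_erp ::
  "'y measure \<Rightarrow> 'p measure \<Rightarrow> ('y \<Rightarrow> 'p \<Rightarrow> real) \<Rightarrow> ('p \<Rightarrow> real) set \<Rightarrow> 'y list \<Rightarrow> real
    \<Rightarrow> ('p \<Rightarrow> real) \<Rightarrow> bool" where
  "is_erp MY MP p P ys \<gamma> \<pi> \<longleftrightarrow>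
     \<pi> \<in> P \<and> proper_prior MP \<pi> \<and>
     (\<forall>\<pi>'\<in>P. proper_prior MP \<pi>' \<longrightarrow>
        (\<exists>l\<ge>0. ((\<lambda>k. erp_objective MY MP p ys \<gamma> \<pi> k - erp_objective MY MP p ys \<gamma> \<pi>' k)
                   \<longlongrightarrow> l) sequentially))"

definition statistic_model ::
  "'x measure \<Rightarrow> 't measure \<Rightarrow> 'p measure \<Rightarrow> ('x \<Rightarrow> 'p \<Rightarrow> real) \<Rightarrow> ('x \<Rightarrow> 't)
    \<Rightarrow> ('t \<Rightarrow> 'p \<Rightarrow> real) \<Rightarrow> bool" where
  "statistic_model MX MT MP p t q \<longleftrightarrow>
     t \<in> MX \<rightarrow>\<^sub>M MT \<and> density_model MT MP q \<and>
     (\<forall>\<theta>\<in>space MP. distr (density MX (\<lambda>x. ennreal (p x \<theta>))) MT t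
                      = density MT (\<lambda>s. ennreal (q s \<theta>)))"

text \<open>t is sufficient: p(x | theta) = p(x | t(x)) p(t(x) | theta), where the conditional
  density p(x | t) = h(x) does not depend on theta.\<close>
definition sufficient_stat ::
  "'x measure \<Rightarrow> 'p measure \<Rightarrow> ('x \<Rightarrow> 'p \<Rightarrow> real) \<Rightarrow> ('x \<Rightarrow> 't) \<Rightarrow> ('t \<Rightarrow> 'p \<Rightarrow> real) \<Rightarrow> bool" where
  "sufficient_stat MX MP p t q \<longleftrightarrow>
     (\<exists>h\<in>borel_measurable MX. (\<forall>x\<in>space MX. 0 \<le> h x) \<and>
        (\<forall>x\<in>space MX. \<forall>\<theta>\<in>space MP. p x \<theta> = h x * q (t x) \<theta>))"

end

theory Submission
  imports Defs
begin

text \<open>By sufficiency p(x | \<theta>) = h(x) q(t(x) | \<theta>), and this factorisation lifts to k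
  replications with h replaced by the product of the h(x_i). Hence p(x | \<pi>) = h(x) q(t(x) | \<pi>),
  so the log-likelihoods of any two priors differ by the same finite constant \<Sum> ln h(x_m) in
  both models, while in the expected information h cancels from the log-ratio and the remaining
  integrand depends on x only through t(x), whose law is q; hence the expected informations of
  the k-fold replicated models agree. The objective differences, and with them the empirical
  reference priors, coincide.\<close>

lemma density_PiM_prod:
  fixes M :: "'a measure" and f :: "'a \<Rightarrow> real"
  assumes fin: "finite I" and "sigma_finite_measure M"
    and "sigma_finite_measure (density M (\<lambda>x. ennreal (f x)))"
    and [measurable]: "f \<in> borel_measurable M" and nonneg: "\<And>x. x \<in> space M \<Longrightarrow> 0 \<le> f x"
  shows "density (PiM I (\<lambda>_. M)) (\<lambda>x. ennreal (\<Prod>i\<in>I. f (x i)))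
       = PiM I (\<lambda>_. density M (\<lambda>x. ennreal (f x)))"
proof -
  interpret D: product_sigma_finite "\<lambda>_. density M (\<lambda>x. ennreal (f x))"
    using assms(3) by (simp add: product_sigma_finite_def)
  interpret M: product_sigma_finite "\<lambda>_. M"
    using assms(2) by (simp add: product_sigma_finite_def)
  show ?thesis
  proof (rule D.PiM_eqI[OF fin])
    show "sets (density (PiM I (\<lambda>_. M)) (\<lambda>x. ennreal (\<Prod>i\<in>I. f (x i))))
        = sets (PiM I (\<lambda>_. density M (\<lambda>x. ennreal (f x))))"
      by (simp add: sets_density cong: sets_PiM_cong)
  next
    fix A assume "\<And>i. i \<in> I \<Longrightarrow> A i \<in> sets (density M (\<lambda>x. ennreal (f x)))"
    then have A: "\<And>i. i \<in> I \<Longrightarrow> A i \<in> sets M" by simp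
    have "Pi\<^sub>E I A \<in> sets (PiM I (\<lambda>_. M))"
      using A by (intro sets_PiM_I_finite fin) auto
    then have "emeasure (density (PiM I (\<lambda>_. M)) (\<lambda>x. ennreal (\<Prod>i\<in>I. f (x i)))) (Pi\<^sub>E I A)
        = (\<integral>\<^sup>+ x. ennreal (\<Prod>i\<in>I. f (x i)) * indicator (Pi\<^sub>E I A) x \<partial>PiM I (\<lambda>_. M))"
      by (simp add: emeasure_density)
    also have "\<dots> = (\<integral>\<^sup>+ x. (\<Prod>i\<in>I. ennreal (f (x i)) * indicator (A i) (x i)) \<partial>PiM I (\<lambda>_. M))"
    proof (rule nn_integral_cong)
      fix x assume "x \<in> space (PiM I (\<lambda>_. M))"
      then have "\<And>i. i \<in> I \<Longrightarrow> x i \<in> space M" and "x \<in> extensional I"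
        by (auto simp: space_PiM PiE_def)
      then have "ennreal (\<Prod>i\<in>I. f (x i)) = (\<Prod>i\<in>I. ennreal (f (x i)))"
        and "indicator (Pi\<^sub>E I A) x = (\<Prod>i\<in>I. indicator (A i) (x i) :: ennreal)"
        using nonneg fin by (auto simp: prod_ennreal indicator_def PiE_def Pi_def prod_zero_iff)
      then show "ennreal (\<Prod>i\<in>I. f (x i)) * indicator (Pi\<^sub>E I A) x
          = (\<Prod>i\<in>I. ennreal (f (x i)) * indicator (A i) (x i))"
        by (simp add: prod.distrib)
    qed
    also have "\<dots> = (\<Prod>i\<in>I. \<integral>\<^sup>+ y. ennreal (f y) * indicator (A i) y \<partial>M)"
      using A by (intro M.product_nn_integral_prod fin) auto
    also have "\<dots> = (\<Prod>i\<in>I. emeasure (density M (\<lambda>x. ennreal (f x))) (A i))"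
      using A by (intro prod.cong refl) (simp add: emeasure_density)
    finally show "emeasure (density (PiM I (\<lambda>_. M)) (\<lambda>x. ennreal (\<Prod>i\<in>I. f (x i)))) (Pi\<^sub>E I A)
        = (\<Prod>i\<in>I. emeasure (density M (\<lambda>x. ennreal (f x))) (A i))" .
  qed
qed

lemma eln_mult_pos: "0 < c \<Longrightarrow> eln (c * m) = ereal (ln c) + eln m"
  by (cases "0 < m") (auto simp: eln_def ln_mult zero_less_mult_iff)

lemma ereal_add_left_minus_add: "(ereal c + a) - (ereal c + b) = a - (b::ereal)"
  by (cases a; cases b) simp_all

lemma marg_factor:
  assumes "\<And>\<theta>. \<theta> \<in> space MP \<Longrightarrow> p y \<theta> = c * q z \<theta>"
  shows "marg MP p \<pi> y = c * marg MP q \<pi> z"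
proof -
  have "marg MP p \<pi> y = (\<integral>\<theta>. c * (q z \<theta> * \<pi> \<theta>) \<partial>MP)"
    unfolding marg_def using assms by (intro Bochner_Integration.integral_cong) auto
  then show ?thesis by (simp add: marg_def)
qed

lemma borel_measurable_marg:
  assumes "sigma_finite_measure MP"
    and [measurable]: "(\<lambda>(y, \<theta>). p y \<theta>) \<in> borel_measurable (MY \<Otimes>\<^sub>M MP)" "\<pi> \<in> borel_measurable MP"
  shows "marg MP p \<pi> \<in> borel_measurable MY"
proof -
  interpret sigma_finite_measure MP by fact
  show ?thesis
    unfolding marg_def by (intro borel_measurable_lebesgue_integral) simp
qed

lemma exp_info_statistic:
  assumes dm: "density_model MX MP p" and sm: "statistic_model MX MT MP p t q"
    and ss: "sufficient_stat MX MP p t q" and [measurable]: "\<pi> \<in> borel_measurable MP"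
  shows "exp_info MX MP p \<pi> = exp_info MT MP q \<pi>"
proof -
  from sm have [measurable]: "t \<in> MX \<rightarrow>\<^sub>M MT" and dmT: "density_model MT MP q"
    and law: "\<And>\<theta>. \<theta> \<in> space MP \<Longrightarrow>
      distr (density MX (\<lambda>x. ennreal (p x \<theta>))) MT t = density MT (\<lambda>s. ennreal (q s \<theta>))"
    by (auto simp: statistic_model_def)
  from ss obtain h where
    factor: "\<And>x \<theta>. x \<in> space MX \<Longrightarrow> \<theta> \<in> space MP \<Longrightarrow> p x \<theta> = h x * q (t x) \<theta>"
    by (auto simp: sufficient_stat_def)
  from dm have [measurable]: "(\<lambda>(x, \<theta>). p x \<theta>) \<in> borel_measurable (MX \<Otimes>\<^sub>M MP)"
    and p_nonneg: "\<And>x \<theta>. x \<in> space MX \<Longrightarrow> \<theta> \<in> space MP \<Longrightarrow> 0 \<le> p x \<theta>"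
    by (auto simp: density_model_def)
  from dmT have "sigma_finite_measure MP"
    and [measurable]: "(\<lambda>(s, \<theta>). q s \<theta>) \<in> borel_measurable (MT \<Otimes>\<^sub>M MP)"
    and q_nonneg: "\<And>s \<theta>. s \<in> space MT \<Longrightarrow> \<theta> \<in> space MP \<Longrightarrow> 0 \<le> q s \<theta>"
    by (auto simp: density_model_def)
  then have [measurable]: "marg MP q \<pi> \<in> borel_measurable MT"
    by (intro borel_measurable_marg) simp_all
  have marg_p: "marg MP p \<pi> x = h x * marg MP q \<pi> (t x)" if "x \<in> space MX" for x
    using factor that by (intro marg_factor)
  have "(\<integral>x. \<pi> \<theta> * p x \<theta> * ln (p x \<theta> / marg MP p \<pi> x) \<partial>MX)
      = (\<integral>s. \<pi> \<theta> * q s \<theta> * ln (q s \<theta> / marg MP q \<pi> s) \<partial>MT)"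
    if \<theta>: "\<theta> \<in> space MP" for \<theta>
  proof -
    define G where "G s = \<pi> \<theta> * ln (q s \<theta> / marg MP q \<pi> s)" for s
    have [measurable]: "G \<in> borel_measurable MT"
      unfolding G_def using \<theta> by measurable
    \<comment> \<open>Where h x = 0 both sides vanish; elsewhere h x cancels in the log-ratio.\<close>
    have "\<pi> \<theta> * p x \<theta> * ln (p x \<theta> / marg MP p \<pi> x) = p x \<theta> * G (t x)"
      if "x \<in> space MX" for x
      using that \<theta> by (cases "h x = 0") (simp_all add: factor marg_p G_def)
    then have "(\<integral>x. \<pi> \<theta> * p x \<theta> * ln (p x \<theta> / marg MP p \<pi> x) \<partial>MX)
        = (\<integral>x. p x \<theta> *\<^sub>R G (t x) \<partial>MX)"
      by (intro Bochner_Integration.integral_cong) auto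
    also have "\<dots> = (\<integral>x. G (t x) \<partial>density MX (\<lambda>x. ennreal (p x \<theta>)))"
      using \<theta> p_nonneg by (intro integral_density[symmetric]) auto
    also have "\<dots> = (\<integral>s. G s \<partial>distr (density MX (\<lambda>x. ennreal (p x \<theta>))) MT t)"
      by (intro integral_distr[symmetric]) simp_all
    also have "\<dots> = (\<integral>s. G s \<partial>density MT (\<lambda>s. ennreal (q s \<theta>)))"
      using \<theta> by (simp add: law)
    also have "\<dots> = (\<integral>s. q s \<theta> *\<^sub>R G s \<partial>MT)"
      using \<theta> q_nonneg by (intro integral_density) auto
    finally show ?thesis
      by (simp add: G_def mult.assoc mult.left_commute)
  qed
  then show ?thesis
    unfolding exp_info_def by (intro Bochner_Integration.integral_cong) auto
qed

lemma measurable_compose_rep_meas: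
  "t \<in> MX \<rightarrow>\<^sub>M MT \<Longrightarrow> compose {..<k} t \<in> rep_meas MX k \<rightarrow>\<^sub>M rep_meas MT k"
  unfolding rep_meas_def compose_def
  by (intro measurable_restrict measurable_compose[OF measurable_component_singleton]) auto

lemma density_rep_dens:
  assumes dm: "density_model MY MP p" and \<theta>: "\<theta> \<in> space MP"
  shows "density (rep_meas MY k) (\<lambda>ys. ennreal (rep_dens p k ys \<theta>))
       = PiM {..<k} (\<lambda>_. density MY (\<lambda>y. ennreal (p y \<theta>)))"
proof -
  from dm have [measurable]: "(\<lambda>(y, \<theta>). p y \<theta>) \<in> borel_measurable (MY \<Otimes>\<^sub>M MP)"
    by (simp add: density_model_def)
  from dm \<theta> show ?thesis
    unfolding rep_meas_def rep_dens_def
    by (intro density_PiM_prod) (auto simp: density_model_def intro: prob_space_imp_sigma_finite)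
qed

lemma density_model_rep_dens:
  assumes dm: "density_model MY MP p"
  shows "density_model (rep_meas MY k) MP (rep_dens p k)"
proof -
  from dm have "sigma_finite_measure MY"
    and [measurable]: "(\<lambda>(y, \<theta>). p y \<theta>) \<in> borel_measurable (MY \<Otimes>\<^sub>M MP)"
    by (auto simp: density_model_def)
  then interpret product_sigma_finite "\<lambda>_. MY"
    by (simp add: product_sigma_finite_def)
  have "sigma_finite_measure (rep_meas MY k)"
    unfolding rep_meas_def by (intro sigma_finite) simp
  moreover have "(\<lambda>(ys, \<theta>). rep_dens p k ys \<theta>) \<in> borel_measurable (rep_meas MY k \<Otimes>\<^sub>M MP)"
    unfolding rep_meas_def rep_dens_def by measurable
  moreover have "prob_space (density (rep_meas MY k) (\<lambda>ys. ennreal (rep_dens p k ys \<theta>)))"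
    if "\<theta> \<in> space MP" for \<theta>
    unfolding density_rep_dens[OF dm that] using dm that
    by (intro prob_space_PiM) (simp add: density_model_def)
  ultimately show ?thesis
    using dm by (auto simp: density_model_def rep_dens_def rep_meas_def space_PiM intro!: prod_nonneg)
qed

lemma statistic_model_rep_dens:
  assumes dm: "density_model MX MP p" and sm: "statistic_model MX MT MP p t q"
  shows "statistic_model (rep_meas MX k) (rep_meas MT k) MP (rep_dens p k) (compose {..<k} t) (rep_dens q k)"
proof -
  from sm have t: "t \<in> MX \<rightarrow>\<^sub>M MT" and dmT: "density_model MT MP q"
    and law: "\<And>\<theta>. \<theta> \<in> space MP \<Longrightarrow>
      distr (density MX (\<lambda>x. ennreal (p x \<theta>))) MT t = density MT (\<lambda>s. ennreal (q s \<theta>))"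
    by (auto simp: statistic_model_def)
  have "distr (density (rep_meas MX k) (\<lambda>ys. ennreal (rep_dens p k ys \<theta>))) (rep_meas MT k) (compose {..<k} t)
      = density (rep_meas MT k) (\<lambda>s. ennreal (rep_dens q k s \<theta>))"
    if \<theta>: "\<theta> \<in> space MP" for \<theta>
  proof -
    define DX where "DX = density MX (\<lambda>x. ennreal (p x \<theta>))"
    define DT where "DT = density MT (\<lambda>s. ennreal (q s \<theta>))"
    have "prob_space DX" "prob_space DT"
      using dm dmT \<theta> by (auto simp: DX_def DT_def density_model_def)
    moreover have "t \<in> DX \<rightarrow>\<^sub>M DT"
      using t by (simp add: DX_def DT_def measurable_cong_sets[OF sets_density sets_density])
    moreover have "sets (PiM {..<k} (\<lambda>_. DT)) = sets (rep_meas MT k)"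
      by (simp add: rep_meas_def DT_def cong: sets_PiM_cong)
    ultimately have "distr (density (rep_meas MX k) (\<lambda>ys. ennreal (rep_dens p k ys \<theta>)))
          (rep_meas MT k) (compose {..<k} t)
        = PiM {..<k} (\<lambda>_. distr DX DT t)"
      using density_rep_dens[OF dm \<theta>, of k]
      by (simp add: DX_def[symmetric] distr_PiM_finite_prob_space'[symmetric] cong: distr_cong)
    also have "distr DX DT t = DT"
      using law[OF \<theta>] by (simp add: DX_def DT_def cong: distr_cong)
    finally show ?thesis
      using dmT \<theta> by (simp add: density_rep_dens DT_def)
  qed
  then show ?thesis
    using t dmT by (simp add: statistic_model_def measurable_compose_rep_meas density_model_rep_dens)
qed

lemma sufficient_stat_rep_dens:
  assumes "sufficient_stat MX MP p t q"
  shows "sufficient_stat (rep_meas MX k) MP (rep_dens p k) (compose {..<k} t) (rep_dens q k)"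
proof -
  from assms obtain h where [measurable]: "h \<in> borel_measurable MX"
    and h_nonneg: "\<forall>x\<in>space MX. 0 \<le> h x"
    and factor: "\<forall>x\<in>space MX. \<forall>\<theta>\<in>space MP. p x \<theta> = h x * q (t x) \<theta>"
    unfolding sufficient_stat_def by blast
  define H where "H ys = (\<Prod>i<k. h (ys i))" for ys
  have "H \<in> borel_measurable (rep_meas MX k)"
    unfolding H_def rep_meas_def by measurable
  moreover have "\<forall>ys\<in>space (rep_meas MX k). 0 \<le> H ys"
    using h_nonneg by (auto simp: H_def rep_meas_def space_PiM intro!: prod_nonneg)
  moreover have "\<forall>ys\<in>space (rep_meas MX k). \<forall>\<theta>\<in>space MP.
      rep_dens p k ys \<theta> = H ys * rep_dens q k (compose {..<k} t ys) \<theta>"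
    using factor
    by (auto simp: H_def rep_dens_def rep_meas_def space_PiM compose_def prod.distrib[symmetric]
        intro!: prod.cong)
  ultimately show ?thesis
    unfolding sufficient_stat_def by blast
qed

lemma log_lik_factor:
  assumes "\<And>x \<theta>. x \<in> set xs \<Longrightarrow> \<theta> \<in> space MP \<Longrightarrow> p x \<theta> = h x * q (t x) \<theta>"
    and "\<And>x. x \<in> set xs \<Longrightarrow> 0 < h x"
  shows "log_lik MP p \<pi> xs = ereal (\<Sum>x\<leftarrow>xs. ln (h x)) + log_lik MP q \<pi> (map t xs)"
  using assms
proof (induction xs)
  case Nil
  then show ?case by (simp add: log_lik_def)
next
  case (Cons x xs)
  have "eln (marg MP p \<pi> x) = ereal (ln (h x)) + eln (marg MP q \<pi> (t x))"
    using Cons.prems by (simp add: marg_factor[of MP p x "h x" q "t x"] eln_mult_pos)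
  with Cons show ?case
    by (simp add: log_lik_def add_ac flip: plus_ereal.simps(1))
qed

lemma is_erp_iff_objective_shift:
  assumes "\<And>\<pi> k. proper_prior MP \<pi> \<Longrightarrow>
    erp_objective MX MP p xs \<gamma> \<pi> k = ereal C + erp_objective MT MP q ys \<gamma> \<pi> k"
  shows "is_erp MX MP p P xs \<gamma> \<pi> \<longleftrightarrow> is_erp MT MP q P ys \<gamma> \<pi>"
  by (auto simp: is_erp_def assms ereal_add_left_minus_add)

theorem theorem4:
  fixes MX :: "'x measure" and MT :: "'t measure" and MP :: "'p measure"
    and p :: "'x \<Rightarrow> 'p \<Rightarrow> real" and t :: "'x \<Rightarrow> 't" and q :: "'t \<Rightarrow> 'p \<Rightarrow> real"
    and P :: "('p \<Rightarrow> real) set" and xs :: "'x list" and \<gamma> :: real and \<pi> :: "'p \<Rightarrow> real"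
  assumes "density_model MX MP p"
    and "statistic_model MX MT MP p t q"
    and "sufficient_stat MX MP p t q"
    and "\<gamma> > 0"
    and "set xs \<subseteq> space MX"
    and "\<forall>x\<in>set xs. \<exists>\<theta>\<in>space MP. 0 < p x \<theta>"
  shows "is_erp MX MP p P xs \<gamma> \<pi> \<longleftrightarrow> is_erp MT MP q P (map t xs) \<gamma> \<pi>"
proof -
  from assms(3) obtain h where h_nonneg: "\<forall>x\<in>space MX. 0 \<le> h x"
    and factor: "\<forall>x\<in>space MX. \<forall>\<theta>\<in>space MP. p x \<theta> = h x * q (t x) \<theta>"
    unfolding sufficient_stat_def by blast
  have "0 < h x" if "x \<in> set xs" for x
    using that assms(5,6) h_nonneg factor by (fastforce simp: less_le)
  then have log_lik: "log_lik MP p \<pi>' xs = ereal (\<Sum>x\<leftarrow>xs. ln (h x)) + log_lik MP q \<pi>' (map t xs)"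
    for \<pi>'
    using assms(5) factor by (intro log_lik_factor) auto
  have "exp_info (rep_meas MX k) MP (rep_dens p k) \<pi>' = exp_info (rep_meas MT k) MP (rep_dens q k) \<pi>'"
    if "proper_prior MP \<pi>'" for \<pi>' k
    using that assms(1-3)
    by (intro exp_info_statistic[where t = "compose {..<k} t"] density_model_rep_dens
        statistic_model_rep_dens sufficient_stat_rep_dens) (simp_all add: proper_prior_def)
  then show ?thesis
    by (intro is_erp_iff_objective_shift) (simp add: erp_objective_def log_lik add.assoc)
qed

end
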